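(* For every temporal graph with static graph $G=(V,E)$ and lifetime $T_{\max}$ and all $\delta,k$, there is an algorithm (strategy for the Discoverer) that wins the temporal graph discovery game in $|V|\,T_{\max}$ rounds.
   Context: A temporal graph $\mathcal G=(V,E,\lambda)$ with lifetime $T_{\max}$ consists of a finite undirected static graph $(V,E)$ and a labeling $\lambda:E\to\{1,\dots,T_{\max}\}$; edge $e$ is present only at time $\lambda(e)$. Infection model with parameter $\delta\in\mathbb N^+$: a set $S\subseteq V\times[0,T_{\max}]$ of seed infections is given; a seed $(u,t)$ makes $u$ infected at time $t$; otherwise a susceptible node $u$ becomes infected at time $t$ iff some neighbour $v$ infectious at time $t$ has $\lambda(uv)=t$ (exactly one infector recorded if several exist). A node infected at time $t$ is infectious at times $t+1,\dots,t+\delta$ and resistant afterwards. The infection log records triples $(u,v,t)$ ($u$ infected $v$ at time $t$; seeds as $(u,u,t)$). Temporal graph discovery game with parameters $T_{\max},\delta,k$: the Discoverer knows $V$ and $E$; each round it submits at most $k$ seed infections and the Adversary answers with an infection log consistent with the seeds under some labeling consistent with all previous answers (adaptively chosen). The Discoverer wins iff its final submitted labeling matches the Adversary's final labeling consistent with all logs, i.e. effectively iff the labeling is uniquely determined by the logs. *)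

theory Defs
  imports Main
begin

text \<open>A labeling maps edges to {1..Tmax}; to make
  labelings comparable by plain equality, it is required to be 0 off E.\<close>

definition static_graph :: "'a set \<Rightarrow> 'a set set \<Rightarrow> bool" where
  "static_graph V E \<longleftrightarrow> finite V \<and>
     (\<forall>e\<in>E. \<exists>u v. e = {u, v} \<and> u \<noteq> v \<and> u \<in> V \<and> v \<in> V)"

definition labeling :: "'a set set \<Rightarrow> nat \<Rightarrow> ('a set \<Rightarrow> nat) \<Rightarrow> bool" where
  "labeling E Tmax lam \<longleftrightarrow> (\<forall>e\<in>E. 1 \<le> lam e \<and> lam e \<le> Tmax) \<and> (\<forall>e. e \<notin> E \<longrightarrow> lam e = 0)"

type_synonym 'a seeds = "('a \<times> nat) set"
type_synonym 'a infection_log = "('a \<times> 'a \<times> nat) set"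

definition infectious :: "nat \<Rightarrow> 'a infection_log \<Rightarrow> 'a \<Rightarrow> nat \<Rightarrow> bool" where
  "infectious \<delta> L x t \<longleftrightarrow> (\<exists>y s. (y, x, s) \<in> L \<and> s < t \<and> t \<le> s + \<delta>)"

definition transmits ::
  "'a set set \<Rightarrow> ('a set \<Rightarrow> nat) \<Rightarrow> nat \<Rightarrow> 'a infection_log \<Rightarrow> 'a \<Rightarrow> 'a \<Rightarrow> nat \<Rightarrow> bool" where
  "transmits E lam \<delta> L x v t \<longleftrightarrow> {x, v} \<in> E \<and> lam {x, v} = t \<and> infectious \<delta> L x t"

definition eligible ::
  "'a set set \<Rightarrow> ('a set \<Rightarrow> nat) \<Rightarrow> nat \<Rightarrow> 'a seeds \<Rightarrow> 'a infection_log \<Rightarrow> 'a \<Rightarrow> nat \<Rightarrow> bool" where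
  "eligible E lam \<delta> S L v t \<longleftrightarrow> (v, t) \<in> S \<or> (\<exists>x. transmits E lam \<delta> L x v t)"

text \<open>L is an infection log of the process started by seeds S under labeling lam:
  every node is infected at most once, namely at the first time at which it is
  seeded or some infectious neighbour transmits to it along an edge present at
  that time; seeds are recorded as (u,u,t), other infections with one infector.\<close>
definition valid_log ::
  "'a set \<Rightarrow> 'a set set \<Rightarrow> nat \<Rightarrow> nat \<Rightarrow> ('a set \<Rightarrow> nat) \<Rightarrow> 'a seeds \<Rightarrow> 'a infection_log \<Rightarrow> bool" where
  "valid_log V E Tmax \<delta> lam S L \<longleftrightarrow>
     L \<subseteq> V \<times> V \<times> {0..Tmax}
   \<and> (\<forall>x y v t t'. (x, v, t) \<in> L \<and> (y, v, t') \<in> L \<longrightarrow> x = y \<and> t = t')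
   \<and> (\<forall>v\<in>V. \<forall>t\<le>Tmax. (\<exists>x. (x, v, t) \<in> L) \<longleftrightarrow>
          (eligible E lam \<delta> S L v t \<and> (\<forall>s<t. \<not> eligible E lam \<delta> S L v s)))
   \<and> (\<forall>x v t. (x, v, t) \<in> L \<longrightarrow>
          (if (v, t) \<in> S then x = v else transmits E lam \<delta> L x v t))"

definition consistent ::
  "'a set \<Rightarrow> 'a set set \<Rightarrow> nat \<Rightarrow> nat \<Rightarrow> ('a set \<Rightarrow> nat) \<Rightarrow> ('a seeds \<times> 'a infection_log) list \<Rightarrow> bool" where
  "consistent V E Tmax \<delta> lam H \<longleftrightarrow> labeling E Tmax lam \<and>
     (\<forall>(S, L) \<in> set H. valid_log V E Tmax \<delta> lam S L)"

definition seeds_ok :: "'a set \<Rightarrow> nat \<Rightarrow> nat \<Rightarrow> 'a seeds \<Rightarrow> bool" where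
  "seeds_ok V Tmax k S \<longleftrightarrow> finite S \<and> card S \<le> k \<and> S \<subseteq> V \<times> {0..Tmax}"

text \<open>A history H is a legal play against Discoverer strategy strat: in every round
  the submitted seeds are those prescribed by strat on the previous history, and the
  Adversary's answer (log) is consistent, together with all earlier answers, with
  some labeling (adaptive Adversary).\<close>
definition is_play ::
  "'a set \<Rightarrow> 'a set set \<Rightarrow> nat \<Rightarrow> nat \<Rightarrow> (('a seeds \<times> 'a infection_log) list \<Rightarrow> 'a seeds)
     \<Rightarrow> ('a seeds \<times> 'a infection_log) list \<Rightarrow> bool" where
  "is_play V E Tmax \<delta> strat H \<longleftrightarrow>
     (\<forall>i < length H. fst (H ! i) = strat (take i H) \<and>
        (\<exists>lam. consistent V E Tmax \<delta> lam (take (Suc i) H)))"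

text \<open>The Discoverer (strat, guess) wins the game within R rounds: on every legal
  play it only submits legal seed sets (at most k seeds), and after R rounds its
  guessed labeling equals every labeling consistent with all logs (i.e. whatever
  final labeling the Adversary picks).\<close>
definition wins_within ::
  "'a set \<Rightarrow> 'a set set \<Rightarrow> nat \<Rightarrow> nat \<Rightarrow> nat \<Rightarrow> nat
     \<Rightarrow> (('a seeds \<times> 'a infection_log) list \<Rightarrow> 'a seeds)
     \<Rightarrow> (('a seeds \<times> 'a infection_log) list \<Rightarrow> ('a set \<Rightarrow> nat)) \<Rightarrow> bool" where
  "wins_within V E Tmax \<delta> k R strat guess \<longleftrightarrow>
     (\<forall>H. is_play V E Tmax \<delta> strat H \<longrightarrow>
        (length H < R \<longrightarrow> seeds_ok V Tmax k (strat H)) \<and>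
        (length H = R \<longrightarrow> (\<forall>lam. consistent V E Tmax \<delta> lam H \<longrightarrow> guess H = lam)))"

end

theory Submission
  imports Defs
begin

text \<open>The Discoverer probes every pair (v, t) with t < Tmax separately, seeding only v at time t.
  In such a round nobody is infected before t, so at time t + 1 the node v is the only infectious
  one, and the neighbours u of v infected at time t + 1 are exactly those with label t + 1 on the
  edge vu. Every edge e = {a, b} is therefore revealed by the probe (a, lam e - 1): any labeling
  consistent with that log must also give e the label lam e.\<close>

lemma single_seed_log_time_ge:
  assumes "valid_log V E Tmax \<delta> lam {(v, t0)} L" and "(y, x, s) \<in> L"
  shows "t0 \<le> s"
  using assms(2)
proof (induction s arbitrary: y x rule: less_induct)
  case (less s)
  show ?case
  proof (rule ccontr)
    assume early: "\<not> t0 \<le> s"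
    have "x \<in> V" "s \<le> Tmax"
      using assms(1) less.prems unfolding valid_log_def by auto
    then have "eligible E lam \<delta> {(v, t0)} L x s"
      using assms(1) less.prems unfolding valid_log_def by blast
    then obtain w where "transmits E lam \<delta> L w x s"
      using early unfolding eligible_def by auto
    then obtain y' s' where "(y', w, s') \<in> L" "s' < s"
      unfolding transmits_def infectious_def by auto
    with less.IH early show False by fastforce
  qed
qed

lemma single_seed_not_infectious_until:
  assumes "valid_log V E Tmax \<delta> lam {(v, t0)} L" and "t \<le> t0"
  shows "\<not> infectious \<delta> L x t"
  using single_seed_log_time_ge[OF assms(1)] assms(2) unfolding infectious_def by fastforce

lemma single_seed_infectious_next_iff:
  assumes log: "valid_log V E Tmax \<delta> lam {(v, t0)} L"
    and "\<delta> \<ge> 1" and "v \<in> V" and "t0 \<le> Tmax"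
  shows "infectious \<delta> L x (Suc t0) \<longleftrightarrow> x = v"
proof
  assume "infectious \<delta> L x (Suc t0)"
  then obtain y s where ys: "(y, x, s) \<in> L" "s < Suc t0"
    unfolding infectious_def by auto
  then have "s = t0"
    using single_seed_log_time_ge[OF log] by fastforce
  moreover have "\<not> transmits E lam \<delta> L y x t0"
    using single_seed_not_infectious_until[OF log] unfolding transmits_def by blast
  ultimately show "x = v"
    using log ys unfolding valid_log_def by (metis singletonD prod.inject)
next
  have never_before: "\<forall>s<t0. \<not> eligible E lam \<delta> {(v, t0)} L v s"
    using single_seed_not_infectious_until[OF log]
    unfolding eligible_def transmits_def by auto
  have "eligible E lam \<delta> {(v, t0)} L v t0"
    unfolding eligible_def by simp
  with never_before obtain y where "(y, v, t0) \<in> L"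
    using log assms(3,4) unfolding valid_log_def by blast
  moreover assume "x = v"
  ultimately show "infectious \<delta> L x (Suc t0)"
    using assms(2) unfolding infectious_def by force
qed

lemma single_seed_neighbour_infected_iff:
  assumes log: "valid_log V E Tmax \<delta> lam {(v, t0)} L"
    and "\<delta> \<ge> 1" and "v \<in> V" and "u \<in> V" and "u \<noteq> v" and "{v, u} \<in> E"
    and "Suc t0 \<le> Tmax"
  shows "(\<exists>x. (x, u, Suc t0) \<in> L) \<longleftrightarrow> lam {v, u} = Suc t0"
proof -
  have never_before: "\<forall>s<Suc t0. \<not> eligible E lam \<delta> {(v, t0)} L u s"
    using single_seed_not_infectious_until[OF log] assms(5)
    unfolding eligible_def transmits_def by auto
  have "eligible E lam \<delta> {(v, t0)} L u (Suc t0) \<longleftrightarrow> lam {v, u} = Suc t0"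
    using single_seed_infectious_next_iff[OF log assms(2,3)] assms(5-7)
    unfolding eligible_def transmits_def by auto
  with never_before show ?thesis
    using log assms(4,7) unfolding valid_log_def by auto
qed

lemma single_seed_log_reveals_label:
  assumes log1: "valid_log V E Tmax \<delta> lam1 {(a, t0)} L"
    and log2: "valid_log V E Tmax \<delta> lam2 {(a, t0)} L"
    and "\<delta> \<ge> 1" and "a \<in> V" and "b \<in> V" and "a \<noteq> b" and "{a, b} \<in> E"
    and label: "lam1 {a, b} = Suc t0" and "Suc t0 \<le> Tmax"
  shows "lam2 {a, b} = Suc t0"
proof -
  have "\<exists>x. (x, b, Suc t0) \<in> L"
    using single_seed_neighbour_infected_iff[OF log1] assms(3-9) by auto
  then show ?thesis
    using single_seed_neighbour_infected_iff[OF log2] assms(3-7,9) by auto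
qed

definition probe_strat :: "('a \<times> nat) list \<Rightarrow> ('a seeds \<times> 'a infection_log) list \<Rightarrow> 'a seeds" where
  "probe_strat ps H = (if length H < length ps then {ps ! length H} else {})"

lemma probe_strat_seeds_ok:
  assumes "set ps \<subseteq> V \<times> {0..Tmax}" and "k \<ge> 1"
  shows "seeds_ok V Tmax k (probe_strat ps H)"
  using assms nth_mem[of "length H" ps] unfolding seeds_ok_def probe_strat_def by auto

lemma probe_strat_play_contains_probe:
  assumes "is_play V E Tmax \<delta> (probe_strat ps) H"
    and "p \<in> set ps" and "length ps \<le> length H"
  obtains L where "({p}, L) \<in> set H"
proof -
  obtain i where i: "i < length ps" "ps ! i = p"
    using assms(2) by (metis in_set_conv_nth)
  with assms(3) have "i < length H" by simp
  then have "fst (H ! i) = {p}" "H ! i \<in> set H"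
    using assms(1) i unfolding is_play_def probe_strat_def by auto
  then show thesis
    using that by (metis prod.collapse)
qed

lemma probe_strat_determines_labeling:
  assumes "static_graph V E" and "\<delta> \<ge> 1"
    and play: "is_play V E Tmax \<delta> (probe_strat ps) H"
    and probes: "V \<times> {0..<Tmax} \<subseteq> set ps" and "length ps \<le> length H"
    and c1: "consistent V E Tmax \<delta> lam1 H" and c2: "consistent V E Tmax \<delta> lam2 H"
  shows "lam1 = lam2"
proof
  fix e
  show "lam1 e = lam2 e"
  proof (cases "e \<in> E")
    case True
    then obtain a b where ab: "e = {a, b}" "a \<noteq> b" "a \<in> V" "b \<in> V"
      using assms(1) unfolding static_graph_def by blast
    define t0 where "t0 = lam1 e - 1"
    have label: "lam1 e = Suc t0" "Suc t0 \<le> Tmax"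
      using c1 True unfolding consistent_def labeling_def t0_def by auto
    then have "(a, t0) \<in> set ps"
      using probes ab by auto
    then obtain L where "({(a, t0)}, L) \<in> set H"
      using probe_strat_play_contains_probe[OF play] assms(5) by blast
    then have "valid_log V E Tmax \<delta> lam1 {(a, t0)} L" "valid_log V E Tmax \<delta> lam2 {(a, t0)} L"
      using c1 c2 unfolding consistent_def by auto
    then show ?thesis
      using single_seed_log_reveals_label assms(2) ab True label by metis
  next
    case False
    then show ?thesis
      using c1 c2 unfolding consistent_def labeling_def by simp
  qed
qed

theorem mainTheorem4:
  fixes V :: "'a set" and E :: "'a set set" and Tmax \<delta> k :: nat
  assumes "static_graph V E" and "\<delta> \<ge> 1" and "k \<ge> 1"
  shows "\<exists>strat guess. wins_within V E Tmax \<delta> k (card V * Tmax) strat guess"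
proof -
  have "finite (V \<times> {0..<Tmax})"
    using assms(1) unfolding static_graph_def by simp
  then obtain ps where ps: "set ps = V \<times> {0..<Tmax}" "distinct ps"
    using finite_distinct_list by blast
  then have len: "length ps = card V * Tmax"
    using distinct_card[of ps] by (simp add: card_cartesian_product)
  define guess where "guess H = (SOME lam. consistent V E Tmax \<delta> lam H)" for H
  have "wins_within V E Tmax \<delta> k (card V * Tmax) (probe_strat ps) guess"
    unfolding wins_within_def
  proof (intro allI impI conjI)
    fix H
    show "seeds_ok V Tmax k (probe_strat ps H)"
      using ps(1) assms(3) by (intro probe_strat_seeds_ok) auto
  next
    fix H lam
    assume play: "is_play V E Tmax \<delta> (probe_strat ps) H"
      and rounds: "length H = card V * Tmax"
      and c: "consistent V E Tmax \<delta> lam H"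
    have "consistent V E Tmax \<delta> (guess H) H"
      unfolding guess_def using c by (metis someI)
    then show "guess H = lam"
      using probe_strat_determines_labeling[OF assms(1,2) play] c ps(1) len rounds
      by simp
  qed
  then show ?thesis by blast
qed

end
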